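(* Let the random permutation $\tau$ be uniformly distributed on the alternating group $A_N$, where $N\ge 3$. Then, as $N\to\infty$, $$\Pr[C_\tau\ge t] = O\left(\frac{N}{2^t}\right),$$ with the implied constant independent of $N$ and $t$.
   Context: For a permutation $\pi$ of $\{1,\ldots,N\}$, $C_\pi$ denotes the number of cycles of $\pi$. *)

theory Defs
  imports "HOL-Combinatorics.Combinatorics" "HOL-Probability.Probability"
begin

definition alt_perms :: "nat \<Rightarrow> (nat \<Rightarrow> nat) set" where
  "alt_perms N = {p. p permutes {1..N} \<and> evenperm p}"

text \<open>Number of cycles (fixed points count as cycles of length 1):
  the number of distinct orbits of p on {1..N}.\<close>
definition num_cycles :: "nat \<Rightarrow> (nat \<Rightarrow> nat) \<Rightarrow> nat" where
  "num_cycles N p = card (orbit p ` {1..N})"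

end

theory Submission
  imports Defs
begin

text \<open>
  Weight every permutation \<open>p\<close> of an \<open>n\<close>-element set by \<open>2 ^ c(p)\<close>, where \<open>c(p)\<close> counts
  its cycles. Every permutation of \<open>insert a S\<close> arises from a permutation \<open>q\<close> of \<open>S\<close>
  either by adding \<open>a\<close> as a fixed point (one new cycle) or by inserting \<open>a\<close> in front of some
  \<open>b \<in> S\<close> in its cycle (no new cycle). Hence the total weight grows at most by the factor
  \<open>n + 2\<close> per added point and is at most \<open>(n + 1)!\<close>. By Markov's inequality at most
  \<open>(N + 1)! / 2 ^ t\<close> permutations of \<open>{1..N}\<close> have \<open>t\<close> or more cycles, while \<open>A\<^sub>N\<close>
  has at least \<open>N! / 2\<close> elements, so the probability is at most \<open>2 (N + 1) / 2 ^ t\<close>.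
\<close>

locale insert_into_cycle =
  fixes q :: "'a \<Rightarrow> 'a" and S :: "'a set" and a b :: 'a
  assumes q_permutes: "q permutes S" and finite_S: "finite S"
    and a_notin_S: "a \<notin> S" and b_in_S: "b \<in> S"
begin

text \<open>\<open>p\<close> is \<open>q\<close> with \<open>a\<close> spliced into the cycle of \<open>b\<close>, just before \<open>b\<close>.\<close>
definition p :: "'a \<Rightarrow> 'a" where
  "p = Transposition.transpose a b \<circ> q"

lemma q_a: "q a = a"
  using q_permutes a_notin_S by (rule permutes_not_in)

lemma q_neq_a: "x \<noteq> a \<Longrightarrow> q x \<noteq> a"
  using q_a permutes_inj[OF q_permutes] by (metis injD)

lemma p_a: "p a = b"
  by (simp add: p_def q_a)

lemma p_eq_q: "q x \<noteq> a \<Longrightarrow> q x \<noteq> b \<Longrightarrow> p x = q x"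
  by (simp add: p_def Transposition.transpose_def)

lemma p_eq_a: "q x = b \<Longrightarrow> p x = a"
  by (simp add: p_def)

lemma p_permutes: "p permutes insert a S"
  unfolding p_def
  by (rule permutes_compose[OF permutes_subset[OF q_permutes] permutes_swap_id]) (use b_in_S in auto)

lemma permutation_p: "permutation p"
  using p_permutes finite_S permutation_permutes by blast

lemma permutation_q: "permutation q"
  using q_permutes finite_S permutation_permutes by blast

lemma a_notin_orbit_q_b: "a \<notin> orbit q b"
  using permutes_orbit_subset[OF q_permutes b_in_S] a_notin_S by blast

lemma orbit_p_a: "orbit p a = insert a (orbit q b)"
proof
  show "orbit p a \<subseteq> insert a (orbit q b)"
  proof
    fix z assume "z \<in> orbit p a"
    then show "z \<in> insert a (orbit q b)"
    proof induct
      case base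
      then show ?case using permutation_self_in_orbit[OF permutation_q] p_a by simp
    next
      case (step y)
      show ?case
      proof (cases "y = a")
        case True
        then show ?thesis using permutation_self_in_orbit[OF permutation_q] p_a by simp
      next
        case False
        with step have "q y \<in> orbit q b" by (auto intro: orbit.step)
        moreover have "q y \<noteq> a" using q_neq_a False .
        ultimately show ?thesis by (cases "q y = b") (simp_all add: p_eq_q p_eq_a)
      qed
    qed
  qed
next
  have b_in: "b \<in> orbit p a"
    using orbit.base[of p a] p_a by simp
  have "z \<in> orbit p a" if "z \<in> orbit q b" for z
    using that
  proof induct
    case base
    have "b \<noteq> a" using b_in_S a_notin_S by blast
    then have "q b \<noteq> a" by (rule q_neq_a)
    then show ?case
      using b_in orbit.step[OF b_in] by (cases "q b = b") (simp_all add: p_eq_q)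
  next
    case (step y)
    have "y \<noteq> a" using step(1) a_notin_orbit_q_b by blast
    then have "q y \<noteq> a" by (rule q_neq_a)
    then show ?case
      using b_in orbit.step[OF step(2)] by (cases "q y = b") (simp_all add: p_eq_q)
  qed
  then show "insert a (orbit q b) \<subseteq> orbit p a"
    using permutation_self_in_orbit[OF permutation_p] by blast
qed

lemma orbit_p_eq_orbit_q:
  assumes "y \<in> S" "b \<notin> orbit q y"
  shows "orbit p y = orbit q y"
proof (rule orbit_cong[OF permutation_self_in_orbit[OF permutation_q]])
  fix z assume z: "z \<in> orbit q y"
  have "q z \<noteq> b" using z assms(2) by (auto intro: orbit.step)
  moreover have "z \<noteq> a"
    using z permutes_orbit_subset[OF q_permutes assms(1)] a_notin_S by blast
  then have "q z \<noteq> a" by (rule q_neq_a)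
  ultimately show "p z = q z" by (simp add: p_eq_q)
qed

lemma card_orbits_p_le: "card (orbit p ` insert a S) \<le> card (orbit q ` S)"
proof -
  define g where "g Z = (if b \<in> Z then insert a Z else Z)" for Z
  have "orbit p ` insert a S \<subseteq> g ` orbit q ` S"
  proof
    fix X assume "X \<in> orbit p ` insert a S"
    then obtain y where y: "y \<in> insert a S" "X = orbit p y" by blast
    show "X \<in> g ` orbit q ` S"
    proof (cases "y \<in> orbit p a")
      case True
      then have "X = orbit p a"
        using y orbit_cyclic_eq3[OF cyclic_on_orbit'[OF permutation_p]] by blast
      then have "X = g (orbit q b)"
        using orbit_p_a permutation_self_in_orbit[OF permutation_q] by (simp add: g_def)
      then show ?thesis using b_in_S by blast
    next
      case False
      then have "y \<in> S" "y \<notin> orbit q b"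
        using y orbit_p_a by auto
      moreover from this have "b \<notin> orbit q y"
        using orbit_swap[OF permutation_self_in_orbit[OF permutation_q]] by blast
      ultimately have "X = g (orbit q y)"
        using y orbit_p_eq_orbit_q by (simp add: g_def)
      then show ?thesis using \<open>y \<in> S\<close> by blast
    qed
  qed
  then have "card (orbit p ` insert a S) \<le> card (g ` orbit q ` S)"
    using finite_S by (intro card_mono) auto
  also have "\<dots> \<le> card (orbit q ` S)"
    using finite_S by (intro card_image_le) auto
  finally show ?thesis .
qed

end

definition two_pow_cycles_sum :: "'a set \<Rightarrow> nat" where
  "two_pow_cycles_sum S = (\<Sum>p\<in>{p. p permutes S}. 2 ^ card (orbit p ` S))"

lemma two_pow_cycles_sum_insert:
  assumes "finite S" "a \<notin> S"
  shows "two_pow_cycles_sum (insert a S) \<le> (card S + 2) * two_pow_cycles_sum S"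
proof -
  let ?P = "{p. p permutes S}"
  let ?w = "\<lambda>p. (2::nat) ^ card (orbit p ` insert a S)"
  have fixed: "?w q \<le> 2 * 2 ^ card (orbit q ` S)" for q
  proof -
    have "card (orbit q ` insert a S) \<le> Suc (card (orbit q ` S))"
      using assms(1) by (simp add: card_insert_le_m1 card_insert_if)
    then have "?w q \<le> 2 ^ Suc (card (orbit q ` S))"
      by (rule power_increasing) simp
    then show ?thesis by simp
  qed
  have inserted: "?w (Transposition.transpose a b \<circ> q) \<le> 2 ^ card (orbit q ` S)"
    if "b \<in> S" "q \<in> ?P" for b q
  proof -
    interpret insert_into_cycle q S a b
      using assms that by unfold_locales auto
    show ?thesis
      using card_orbits_p_le unfolding p_def by (intro power_increasing) auto
  qed
  have "two_pow_cycles_sum (insert a S)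
      = (\<Sum>b\<in>insert a S. \<Sum>q\<in>?P. ?w (Transposition.transpose a b \<circ> q))"
    unfolding two_pow_cycles_sum_def by (rule sum_over_permutations_insert[OF assms])
  also have "\<dots> = (\<Sum>q\<in>?P. ?w q) + (\<Sum>b\<in>S. \<Sum>q\<in>?P. ?w (Transposition.transpose a b \<circ> q))"
    using assms by simp
  also have "\<dots> \<le> 2 * two_pow_cycles_sum S + (\<Sum>b\<in>S. two_pow_cycles_sum S)"
    unfolding two_pow_cycles_sum_def sum_distrib_left
  proof (rule add_mono)
    show "(\<Sum>q\<in>?P. ?w q) \<le> (\<Sum>q\<in>?P. 2 * 2 ^ card (orbit q ` S))"
      by (rule sum_mono) (rule fixed)
    show "(\<Sum>b\<in>S. \<Sum>q\<in>?P. ?w (Transposition.transpose a b \<circ> q))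
        \<le> (\<Sum>b\<in>S. \<Sum>q\<in>?P. 2 ^ card (orbit q ` S))"
      by (rule sum_mono)+ (rule inserted)
  qed
  also have "\<dots> = (card S + 2) * two_pow_cycles_sum S"
    by simp
  finally show ?thesis .
qed

lemma two_pow_cycles_sum_le_fact: "finite S \<Longrightarrow> two_pow_cycles_sum S \<le> fact (card S + 1)"
proof (induction S rule: finite_induct)
  case empty
  then show ?case by (simp add: two_pow_cycles_sum_def permutes_empty)
next
  case (insert a S)
  have "two_pow_cycles_sum (insert a S) \<le> (card S + 2) * two_pow_cycles_sum S"
    using insert.hyps by (rule two_pow_cycles_sum_insert)
  also have "\<dots> \<le> (card S + 2) * fact (card S + 1)"
    using insert.IH by (rule mult_left_mono) simp
  also have "\<dots> = fact (card (insert a S) + 1)"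
    using insert.hyps by (simp add: fact_Suc)
  finally show ?case .
qed

text \<open>Left multiplication by the transposition \<open>(1 2)\<close> maps odd permutations injectively
  to even ones.\<close>
lemma fact_le_twice_card_alt_perms:
  assumes "N \<ge> 2"
  shows "fact N \<le> 2 * card (alt_perms N)"
proof -
  define P where "P = {p. p permutes {1..N}}"
  define A where "A = alt_perms N"
  define s where "s = Transposition.transpose (1::nat) 2"
  have finite_P: "finite P" and card_P: "card P = fact N"
    unfolding P_def by (simp_all add: finite_permutations card_permutations)
  have A_sub: "A \<subseteq> P"
    unfolding A_def P_def alt_perms_def by auto
  have s_permutes: "s permutes {1..N}"
    unfolding s_def using assms by (intro permutes_swap_id) auto
  have "(\<circ>) s ` (P - A) \<subseteq> A"
  proof
    fix x assume "x \<in> (\<circ>) s ` (P - A)"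
    then obtain r where r: "r permutes {1..N}" "\<not> evenperm r" "x = s \<circ> r"
      unfolding P_def A_def alt_perms_def by blast
    have "permutation s" "permutation r"
      using s_permutes r(1) by (auto simp: permutation_permutes)
    then have "evenperm (s \<circ> r) = (evenperm s = evenperm r)"
      by (rule evenperm_comp)
    then have "evenperm (s \<circ> r)"
      using evenperm_swap[of "1::nat" 2] r(2) by (simp add: s_def)
    then show "x \<in> A"
      using r permutes_compose[OF r(1) s_permutes] unfolding A_def alt_perms_def by simp
  qed
  moreover have "inj_on ((\<circ>) s) (P - A)"
  proof (rule inj_onI)
    fix x y assume "s \<circ> x = s \<circ> y"
    then have "s \<circ> (s \<circ> x) = s \<circ> (s \<circ> y)" by simp
    then show "x = y" by (simp add: s_def comp_assoc[symmetric])
  qed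
  ultimately have "card (P - A) \<le> card A"
    using finite_subset[OF A_sub finite_P] by (intro card_inj_on_le)
  moreover have "card P = card A + card (P - A)"
    using A_sub finite_P
    by (metis card_Diff_subset finite_subset card_mono le_add_diff_inverse)
  ultimately show ?thesis
    using card_P A_def by simp
qed

lemma card_many_cycles_le:
  "card {\<tau> \<in> alt_perms N. t \<le> num_cycles N \<tau>} * 2 ^ t \<le> fact (N + 1)"
proof -
  let ?P = "{p. p permutes {1..N}}"
  let ?E = "{\<tau> \<in> alt_perms N. t \<le> num_cycles N \<tau>}"
  have "finite ?P" by (simp add: finite_permutations)
  have "card ?E * 2 ^ t = (\<Sum>\<tau>\<in>?E. (2::nat) ^ t)"
    by simp
  also have "\<dots> \<le> (\<Sum>\<tau>\<in>?E. 2 ^ num_cycles N \<tau>)"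
    by (intro sum_mono power_increasing) auto
  also have "\<dots> \<le> (\<Sum>\<tau>\<in>?P. 2 ^ num_cycles N \<tau>)"
    using \<open>finite ?P\<close> by (intro sum_mono2) (auto simp: alt_perms_def)
  also have "\<dots> = two_pow_cycles_sum {1..N}"
    unfolding two_pow_cycles_sum_def num_cycles_def ..
  also have "\<dots> \<le> fact (N + 1)"
    using two_pow_cycles_sum_le_fact[of "{1..N}"] by simp
  finally show ?thesis .
qed

lemma finite_alt_perms: "finite (alt_perms N)"
  by (rule finite_subset[of _ "{p. p permutes {1..N}}"]) (auto simp: alt_perms_def finite_permutations)

lemma id_in_alt_perms: "id \<in> alt_perms N"
  by (simp add: alt_perms_def permutes_id evenperm_id)

lemma prob_many_cycles_alt_perms_le:
  assumes "N \<ge> 2"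
  shows "measure_pmf.prob (pmf_of_set (alt_perms N)) {\<tau>. num_cycles N \<tau> \<ge> t}
           \<le> 2 * (real N + 1) / 2 ^ t"
proof -
  let ?A = "alt_perms N"
  let ?E = "{\<tau> \<in> ?A. t \<le> num_cycles N \<tau>}"
  have A_pos: "card ?A > 0"
    using finite_alt_perms id_in_alt_perms card_gt_0_iff by blast
  have "card ?E * 2 ^ t \<le> (N + 1) * fact N"
    using card_many_cycles_le[of N t] by simp
  also have "\<dots> \<le> (N + 1) * (2 * card ?A)"
    using fact_le_twice_card_alt_perms assms by (intro mult_left_mono) simp_all
  finally have "real (card ?E * 2 ^ t) \<le> real ((N + 1) * (2 * card ?A))"
    by (rule of_nat_mono)
  then have bound: "real (card ?E) * 2 ^ t \<le> 2 * (real N + 1) * card ?A"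
    by (simp add: algebra_simps)
  have "measure_pmf.prob (pmf_of_set ?A) {\<tau>. num_cycles N \<tau> \<ge> t} = card ?E / card ?A"
    using finite_alt_perms id_in_alt_perms by (subst measure_pmf_of_set) (auto simp: Int_def)
  also have "\<dots> \<le> 2 * (real N + 1) / 2 ^ t"
    using bound A_pos by (simp add: divide_simps mult.commute mult.left_commute)
  finally show ?thesis .
qed

theorem theorem2p2:
  "\<exists>K::real. \<forall>N::nat. \<forall>t::nat. N \<ge> 3 \<longrightarrow>
     measure_pmf.prob (pmf_of_set (alt_perms N)) {\<tau>. num_cycles N \<tau> \<ge> t}
       \<le> K * real N / 2 ^ t"
proof (intro exI allI impI)
  fix N t :: nat assume "N \<ge> 3"
  then have "measure_pmf.prob (pmf_of_set (alt_perms N)) {\<tau>. num_cycles N \<tau> \<ge> t}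
      \<le> 2 * (real N + 1) / 2 ^ t"
    by (intro prob_many_cycles_alt_perms_le) simp
  also have "\<dots> \<le> 4 * real N / 2 ^ t"
    using \<open>N \<ge> 3\<close> by (simp add: divide_right_mono)
  finally show "measure_pmf.prob (pmf_of_set (alt_perms N)) {\<tau>. num_cycles N \<tau> \<ge> t}
      \<le> 4 * real N / 2 ^ t" .
qed

end
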